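(* Let $X$ be a semiSegal space and $x\in X_0$ an object. Let $X^{\mathrm{qu}}_x\subseteq \mathrm{Map}_X(x,x)$ be the maximal sub-simplicial set spanned by those vertices (points) of $\mathrm{Map}_X(x,x)$ which are quasi-units. If $X^{\mathrm{qu}}_x$ is non-empty, then it is connected.
   Context: Spaces are simplicial sets with the Kan–Quillen model structure; $\mathrm{Ho}(\mathrm{sSet})$ is its homotopy category. $\Delta_s$ is the category of finite ordinals $[n]=\{0,\dots,n\}$ and injective order-preserving maps; a semi-simplicial space is a functor $X:\Delta_s^{op}\to\mathrm{sSet}$, $X_n=X([n])$. For $\sigma\in X_n$ and $I\subseteq[n]$, $\sigma|_{\Delta^I}$ denotes the restriction to the face spanned by $I$. $X$ is Reedy fibrant if for every $n$ the map from $X_n$ to its matching object (the space of compatible families of boundary faces) is a Kan fibration. $X$ satisfies the Segal condition if for all $n,m\ge0$ the square formed by $X_{n+m}\to X_n$ (restriction to $\{0,\dots,n\}$), $X_{n+m}\to X_m$ (restriction to $\{n,\dots,n+m\}$), $X_n\to X_0$ (vertex $n$), $X_m\to X_0$ (vertex $0$) is homotopy cartesian. A semiSegal space is a Reedy fibrant semi-simplicial space satisfying the Segal condition. Objects are points of $X_0$; for objects $x,y$, $\mathrm{Map}_X(x,y)$ is the fiber over $(x,y)$ of the Kan fibration $X_1\to X_0\times X_0$, $e\mapsto(e|_{\Delta^{\{0\}}},e|_{\Delta^{\{1\}}})$; a point $f$ of it is written $f:x\to y$. For $f:x\to y$ and an object $z$, let $C^R_{f,z}=\{\sigma\in X_2:\sigma|_{\Delta^{\{1,2\}}}=f,\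 \sigma|_{\Delta^{\{0\}}}=z\}$ with restriction maps $\varphi:C^R_{f,z}\to\mathrm{Map}_X(z,x)$ (edge $\{0,1\}$), which is a weak equivalence, and $\psi:C^R_{f,z}\to\mathrm{Map}_X(z,y)$ (edge $\{0,2\}$); set $[f]_*=[\psi]\circ[\varphi]^{-1}$ in $\mathrm{Ho}(\mathrm{sSet})$. Dually, $C^L_{f,z}=\{\sigma\in X_2:\sigma|_{\Delta^{\{0,1\}}}=f,\ \sigma|_{\Delta^{\{2\}}}=z\}$ with the weak equivalence restriction to $\mathrm{Map}_X(y,z)$ (edge $\{1,2\}$) and restriction to $\mathrm{Map}_X(x,z)$ (edge $\{0,2\}$) defines $[f]^*:\mathrm{Map}_X(y,z)\to\mathrm{Map}_X(x,z)$ in $\mathrm{Ho}(\mathrm{sSet})$. A morphism $f:x\to x$ is a quasi-unit if for every object $z$, both $[f]_*$ and $[f]^*$ are identities in $\mathrm{Ho}(\mathrm{sSet})$. *)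

theory Defs
  imports Main
begin

text \<open>A monotone map [m] -> [n] is encoded as a function nat => nat, only its values
on {0..m} matter.\<close>

definition mono_map :: "nat \<Rightarrow> nat \<Rightarrow> (nat \<Rightarrow> nat) \<Rightarrow> bool" where
  "mono_map m n \<alpha> \<longleftrightarrow> (\<forall>i\<le>m. \<alpha> i \<le> n) \<and> (\<forall>i j. i \<le> j \<and> j \<le> m \<longrightarrow> \<alpha> i \<le> \<alpha> j)"

definition inj_mono :: "nat \<Rightarrow> nat \<Rightarrow> (nat \<Rightarrow> nat) \<Rightarrow> bool" where
  "inj_mono m n \<delta> \<longleftrightarrow> (\<forall>i\<le>m. \<delta> i \<le> n) \<and> (\<forall>i j. i < j \<and> j \<le> m \<longrightarrow> \<delta> i < \<delta> j)"

definition face_map :: "nat \<Rightarrow> nat \<Rightarrow> nat" where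
  "face_map i = (\<lambda>j. if j < i then j else Suc j)"

text \<open>sset_carrier A n = the n-simplices; sset_act A n m \<alpha> : A_n -> A_m for \<alpha> : [m] -> [n].\<close>
record 'a sset =
  sset_carrier :: "nat \<Rightarrow> 'a set"
  sset_act :: "nat \<Rightarrow> nat \<Rightarrow> (nat \<Rightarrow> nat) \<Rightarrow> 'a \<Rightarrow> 'a"

definition is_sset :: "('a, 'b) sset_scheme \<Rightarrow> bool" where
  "is_sset A \<longleftrightarrow>
     (\<forall>n m \<alpha> a. mono_map m n \<alpha> \<and> a \<in> sset_carrier A n \<longrightarrow> sset_act A n m \<alpha> a \<in> sset_carrier A m) \<and>
     (\<forall>n a. a \<in> sset_carrier A n \<longrightarrow> sset_act A n n (\<lambda>i. i) a = a) \<and>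
     (\<forall>n m p \<alpha> \<beta> a. mono_map m n \<alpha> \<and> mono_map p m \<beta> \<and> a \<in> sset_carrier A n \<longrightarrow>
        sset_act A m p \<beta> (sset_act A n m \<alpha> a) = sset_act A n p (\<alpha> \<circ> \<beta>) a) \<and>
     (\<forall>n m \<alpha> \<alpha>' a. (\<forall>i\<le>m. \<alpha> i = \<alpha>' i) \<and> a \<in> sset_carrier A n \<longrightarrow>
        sset_act A n m \<alpha> a = sset_act A n m \<alpha>' a)"

definition simplicial_map :: "('a, 'c) sset_scheme \<Rightarrow> ('b, 'd) sset_scheme \<Rightarrow> ('a \<Rightarrow> 'b) \<Rightarrow> bool" where
  "simplicial_map A B f \<longleftrightarrow>
     (\<forall>n a. a \<in> sset_carrier A n \<longrightarrow> f a \<in> sset_carrier B n) \<and>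
     (\<forall>n m \<alpha> a. mono_map m n \<alpha> \<and> a \<in> sset_carrier A n \<longrightarrow>
        f (sset_act A n m \<alpha> a) = sset_act B n m \<alpha> (f a))"

text \<open>Sub-simplicial set cut out by a (simplicially closed) predicate.\<close>
definition sub_sset :: "'a sset \<Rightarrow> (nat \<Rightarrow> 'a \<Rightarrow> bool) \<Rightarrow> 'a sset" where
  "sub_sset A P = \<lparr> sset_carrier = (\<lambda>n. {a \<in> sset_carrier A n. P n a}), sset_act = sset_act A \<rparr>"

definition prod_sset :: "'a sset \<Rightarrow> 'b sset \<Rightarrow> ('a \<times> 'b) sset" where
  "prod_sset A B = \<lparr> sset_carrier = (\<lambda>n. sset_carrier A n \<times> sset_carrier B n),
     sset_act = (\<lambda>n m \<alpha> p. (sset_act A n m \<alpha> (fst p), sset_act B n m \<alpha> (snd p))) \<rparr>"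

definition point_sset :: "unit sset" where
  "point_sset = \<lparr> sset_carrier = (\<lambda>n. UNIV), sset_act = (\<lambda>n m \<alpha> x. x) \<rparr>"

text \<open>The standard 1-simplex: n-simplices are monotone maps [n] -> [1] (normalised to 0 outside [n]).\<close>
definition delta1 :: "(nat \<Rightarrow> nat) sset" where
  "delta1 = \<lparr> sset_carrier = (\<lambda>n. {t. mono_map n 1 t \<and> (\<forall>j>n. t j = 0)}),
     sset_act = (\<lambda>n m \<alpha> t. (\<lambda>j. if j \<le> m then t (\<alpha> j) else 0)) \<rparr>"

definition const_simplex :: "nat \<Rightarrow> nat \<Rightarrow> (nat \<Rightarrow> nat)" where
  "const_simplex n e = (\<lambda>j. if j \<le> n then e else 0)"

text \<open>Kan fibrations via horn lifting: a horn Lambda^n_k -> A is a compatible family of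
(n-1)-simplices y_i, i \<noteq> k.\<close>
definition kan_fibration :: "'a sset \<Rightarrow> 'b sset \<Rightarrow> ('a \<Rightarrow> 'b) \<Rightarrow> bool" where
  "kan_fibration A B p \<longleftrightarrow> simplicial_map A B p \<and>
     (\<forall>n k y \<tau>. 1 \<le> n \<and> k \<le> n \<and>
        (\<forall>i\<le>n. i \<noteq> k \<longrightarrow> y i \<in> sset_carrier A (n - 1)) \<and>
        (\<forall>i j. i < j \<and> j \<le> n \<and> i \<noteq> k \<and> j \<noteq> k \<longrightarrow>
            sset_act A (n - 1) (n - 2) (face_map i) (y j) = sset_act A (n - 1) (n - 2) (face_map (j - 1)) (y i)) \<and>
        \<tau> \<in> sset_carrier B n \<and>
        (\<forall>i\<le>n. i \<noteq> k \<longrightarrow> sset_act B n (n - 1) (face_map i) \<tau> = p (y i))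
      \<longrightarrow> (\<exists>\<sigma>\<in>sset_carrier A n. p \<sigma> = \<tau> \<and>
             (\<forall>i\<le>n. i \<noteq> k \<longrightarrow> sset_act A n (n - 1) (face_map i) \<sigma> = y i)))"

definition kan_complex :: "'a sset \<Rightarrow> bool" where
  "kan_complex A \<longleftrightarrow> kan_fibration A point_sset (\<lambda>_. ())"

text \<open>Simplicial homotopy via the cylinder A x Delta^1 (used for maps into Kan complexes).\<close>
definition homotopic :: "'a sset \<Rightarrow> 'b sset \<Rightarrow> ('a \<Rightarrow> 'b) \<Rightarrow> ('a \<Rightarrow> 'b) \<Rightarrow> bool" where
  "homotopic A B f g \<longleftrightarrow> (\<exists>h. simplicial_map (prod_sset A delta1) B h \<and>
     (\<forall>n a. a \<in> sset_carrier A n \<longrightarrow>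
        h (a, const_simplex n 0) = f a \<and> h (a, const_simplex n 1) = g a))"

definition homotopy_inverse :: "'a sset \<Rightarrow> 'b sset \<Rightarrow> ('a \<Rightarrow> 'b) \<Rightarrow> ('b \<Rightarrow> 'a) \<Rightarrow> bool" where
  "homotopy_inverse A B f g \<longleftrightarrow> simplicial_map A B f \<and> simplicial_map B A g \<and>
     homotopic A A (g \<circ> f) (\<lambda>a. a) \<and> homotopic B B (f \<circ> g) (\<lambda>b. b)"

text \<open>Weak equivalence between Kan complexes = homotopy equivalence.\<close>
definition kan_weq :: "'a sset \<Rightarrow> 'b sset \<Rightarrow> ('a \<Rightarrow> 'b) \<Rightarrow> bool" where
  "kan_weq A B f \<longleftrightarrow> (\<exists>g. homotopy_inverse A B f g)"

text \<open>For Kan complexes A, B and maps phi, psi : A -> B with phi a weak equivalence: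
  [psi] o [phi]^-1 = id_B in Ho(sSet).  Morphisms of Ho(sSet) between Kan complexes are
  homotopy classes of maps; [phi]^-1 is represented by a homotopy inverse g of phi.\<close>
definition ho_comp_inv_is_id :: "'a sset \<Rightarrow> 'b sset \<Rightarrow> ('a \<Rightarrow> 'b) \<Rightarrow> ('a \<Rightarrow> 'b) \<Rightarrow> bool" where
  "ho_comp_inv_is_id A B \<phi> \<psi> \<longleftrightarrow> simplicial_map A B \<psi> \<and>
     (\<exists>g. homotopy_inverse A B \<phi> g \<and> homotopic B B (\<psi> \<circ> g) (\<lambda>b. b))"

definition sset_connected :: "'a sset \<Rightarrow> bool" where
  "sset_connected A \<longleftrightarrow> sset_carrier A 0 \<noteq> {} \<and>
     (let E = {(sset_act A 1 0 (\<lambda>_. 0) e, sset_act A 1 0 (\<lambda>_. 1) e) | e. e \<in> sset_carrier A 1}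
      in \<forall>u\<in>sset_carrier A 0. \<forall>v\<in>sset_carrier A 0. (u, v) \<in> (E \<union> E\<inverse>)\<^sup>*)"

text \<open>ss_lev X n = the space X_n; ss_res X n m \<delta> : X_n -> X_m for injective monotone \<delta> : [m] -> [n].\<close>
record 'a ssspace =
  ss_lev :: "nat \<Rightarrow> 'a sset"
  ss_res :: "nat \<Rightarrow> nat \<Rightarrow> (nat \<Rightarrow> nat) \<Rightarrow> 'a \<Rightarrow> 'a"

definition semi_simplicial_space :: "'a ssspace \<Rightarrow> bool" where
  "semi_simplicial_space X \<longleftrightarrow>
     (\<forall>n. is_sset (ss_lev X n)) \<and>
     (\<forall>n m \<delta>. inj_mono m n \<delta> \<longrightarrow> simplicial_map (ss_lev X n) (ss_lev X m) (ss_res X n m \<delta>)) \<and>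
     (\<forall>n k a. a \<in> sset_carrier (ss_lev X n) k \<longrightarrow> ss_res X n n (\<lambda>i. i) a = a) \<and>
     (\<forall>n m p \<delta> \<epsilon> k a. inj_mono m n \<delta> \<and> inj_mono p m \<epsilon> \<and> a \<in> sset_carrier (ss_lev X n) k \<longrightarrow>
        ss_res X m p \<epsilon> (ss_res X n m \<delta> a) = ss_res X n p (\<delta> \<circ> \<epsilon>) a) \<and>
     (\<forall>n m \<delta> \<delta>' k a. (\<forall>i\<le>m. \<delta> i = \<delta>' i) \<and> a \<in> sset_carrier (ss_lev X n) k \<longrightarrow>
        ss_res X n m \<delta> a = ss_res X n m \<delta>' a)"

definition bidx :: "nat \<Rightarrow> nat set" where
  "bidx N = (if N = 0 then {} else {0..N})"

definition matching :: "'a ssspace \<Rightarrow> nat \<Rightarrow> (nat \<Rightarrow> 'a) sset" where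
  "matching X N = \<lparr> sset_carrier = (\<lambda>k. {\<tau>. (\<forall>i. i \<notin> bidx N \<longrightarrow> \<tau> i = undefined) \<and>
        (\<forall>i\<in>bidx N. \<tau> i \<in> sset_carrier (ss_lev X (N - 1)) k) \<and>
        (2 \<le> N \<longrightarrow> (\<forall>i j. i < j \<and> j \<le> N \<longrightarrow>
           ss_res X (N - 1) (N - 2) (face_map i) (\<tau> j) = ss_res X (N - 1) (N - 2) (face_map (j - 1)) (\<tau> i)))}),
     sset_act = (\<lambda>k k' \<alpha> \<tau>. (\<lambda>i. if i \<in> bidx N then sset_act (ss_lev X (N - 1)) k k' \<alpha> (\<tau> i) else undefined)) \<rparr>"

definition boundary_map :: "'a ssspace \<Rightarrow> nat \<Rightarrow> 'a \<Rightarrow> (nat \<Rightarrow> 'a)" where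
  "boundary_map X N \<sigma> = (\<lambda>i. if i \<in> bidx N then ss_res X N (N - 1) (face_map i) \<sigma> else undefined)"

definition reedy_fibrant :: "'a ssspace \<Rightarrow> bool" where
  "reedy_fibrant X \<longleftrightarrow> (\<forall>N. kan_fibration (ss_lev X N) (matching X N) (boundary_map X N))"

text \<open>Strict fibre product X_n x_{X_0} X_m (over vertex n of [n] and vertex 0 of [m]).\<close>
definition segal_pullback :: "'a ssspace \<Rightarrow> nat \<Rightarrow> nat \<Rightarrow> ('a \<times> 'a) sset" where
  "segal_pullback X n m = \<lparr> sset_carrier = (\<lambda>k. {(a, b). a \<in> sset_carrier (ss_lev X n) k \<and>
        b \<in> sset_carrier (ss_lev X m) k \<and> ss_res X n 0 (\<lambda>_. n) a = ss_res X m 0 (\<lambda>_. 0) b}),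
     sset_act = (\<lambda>k k' \<alpha> p. (sset_act (ss_lev X n) k k' \<alpha> (fst p), sset_act (ss_lev X m) k k' \<alpha> (snd p))) \<rparr>"

definition segal_map :: "'a ssspace \<Rightarrow> nat \<Rightarrow> nat \<Rightarrow> 'a \<Rightarrow> 'a \<times> 'a" where
  "segal_map X n m \<sigma> = (ss_res X (n + m) n (\<lambda>i. i) \<sigma>, ss_res X (n + m) m (\<lambda>i. i + n) \<sigma>)"

text \<open>For Reedy fibrant X the map X_m -> X_0 is a Kan fibration, so the square
is homotopy cartesian iff the comparison map to the strict pullback is a weak equivalence
(a homotopy equivalence, all objects being Kan complexes).\<close>
definition segal_condition :: "'a ssspace \<Rightarrow> bool" where
  "segal_condition X \<longleftrightarrow> (\<forall>n m. kan_weq (ss_lev X (n + m)) (segal_pullback X n m) (segal_map X n m))"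

definition semiSegal :: "'a ssspace \<Rightarrow> bool" where
  "semiSegal X \<longleftrightarrow> semi_simplicial_space X \<and> reedy_fibrant X \<and> segal_condition X"

definition vtx :: "nat \<Rightarrow> nat \<Rightarrow> nat" where "vtx i = (\<lambda>_. i)"
definition edge :: "nat \<Rightarrow> nat \<Rightarrow> nat \<Rightarrow> nat" where "edge i j = (\<lambda>l. if l = 0 then i else j)"

definition degen :: "'a ssspace \<Rightarrow> nat \<Rightarrow> nat \<Rightarrow> 'a \<Rightarrow> 'a" where
  "degen X n k v = sset_act (ss_lev X n) 0 k (\<lambda>_. 0) v"

definition mapsp :: "'a ssspace \<Rightarrow> 'a \<Rightarrow> 'a \<Rightarrow> 'a sset" where
  "mapsp X x y = sub_sset (ss_lev X 1) (\<lambda>k e.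
      ss_res X 1 0 (vtx 0) e = degen X 0 k x \<and> ss_res X 1 0 (vtx 1) e = degen X 0 k y)"

definition CR :: "'a ssspace \<Rightarrow> 'a \<Rightarrow> 'a \<Rightarrow> 'a sset" where
  "CR X f z = sub_sset (ss_lev X 2) (\<lambda>k \<sigma>.
      ss_res X 2 1 (edge 1 2) \<sigma> = degen X 1 k f \<and> ss_res X 2 0 (vtx 0) \<sigma> = degen X 0 k z)"

definition CL :: "'a ssspace \<Rightarrow> 'a \<Rightarrow> 'a \<Rightarrow> 'a sset" where
  "CL X f z = sub_sset (ss_lev X 2) (\<lambda>k \<sigma>.
      ss_res X 2 1 (edge 0 1) \<sigma> = degen X 1 k f \<and> ss_res X 2 0 (vtx 2) \<sigma> = degen X 0 k z)"

text \<open>f : x -> x is a quasi-unit: [f]_* = id and [f]^* = id for every object z.\<close>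
definition quasi_unit :: "'a ssspace \<Rightarrow> 'a \<Rightarrow> 'a \<Rightarrow> bool" where
  "quasi_unit X x f \<longleftrightarrow> f \<in> sset_carrier (mapsp X x x) 0 \<and>
     (\<forall>z\<in>sset_carrier (ss_lev X 0) 0.
        ho_comp_inv_is_id (CR X f z) (mapsp X z x) (ss_res X 2 1 (edge 0 1)) (ss_res X 2 1 (edge 0 2)) \<and>
        ho_comp_inv_is_id (CL X f z) (mapsp X x z) (ss_res X 2 1 (edge 1 2)) (ss_res X 2 1 (edge 0 2)))"

definition qu_sub :: "'a ssspace \<Rightarrow> 'a \<Rightarrow> 'a sset" where
  "qu_sub X x = sub_sset (mapsp X x x) (\<lambda>k e.
      \<forall>v\<le>k. quasi_unit X x (sset_act (mapsp X x x) k 0 (\<lambda>_. v) e))"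

end

theory Submission
  imports Defs
begin

text \<open>Let \<open>f, g\<close> be quasi-units of \<open>x\<close>. Restriction to the edge \<open>{0,1}\<close> is a homotopy
  equivalence \<open>C\<^sup>R\<^sub>f\<^sub>,\<^sub>x \<rightarrow> Map\<^sub>X(x, x)\<close>, so \<open>g\<close> is joined by an edge to a vertex in its image;
  Reedy fibrancy at level 2 lets one slide a 2-simplex along that edge, so \<open>g\<close> is hit exactly.
  This gives a 2-simplex \<open>\<sigma>\<close> with \<open>d\<^sub>0 \<sigma> = f\<close> and \<open>d\<^sub>2 \<sigma> = g\<close>. Now \<open>[f]\<^sub>* = id\<close> joins \<open>g\<close> to
  \<open>d\<^sub>1 \<sigma>\<close>, and \<open>[g]\<^sup>* = id\<close> joins \<open>f\<close> to \<open>d\<^sub>1 \<sigma>\<close>. The vertex \<open>d\<^sub>1 \<sigma>\<close> need not be a quasi-unit, but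
  Reedy fibrancy at level 1 makes \<open>Map\<^sub>X(x, x)\<close> a Kan complex, so the zigzag straightens to a single
  edge from \<open>f\<close> to \<open>g\<close>, which lies in \<open>X\<^sup>q\<^sup>u\<^sub>x\<close> because both its endpoints are quasi-units.\<close>

lemma inj_mono_imp_mono_map: "inj_mono m n \<delta> \<Longrightarrow> mono_map m n \<delta>"
  unfolding inj_mono_def mono_map_def by (metis le_eq_less_or_eq order.strict_trans2)

lemma mono_map_const: "v \<le> n \<Longrightarrow> mono_map m n (\<lambda>_. v)"
  by (simp add: mono_map_def)

lemma inj_mono_face_map: "0 < n \<Longrightarrow> i \<le> n \<Longrightarrow> inj_mono (n - 1) n (face_map i)"
  by (auto simp: inj_mono_def face_map_def)

lemma mono_map_face_map: "0 < n \<Longrightarrow> i \<le> n \<Longrightarrow> mono_map (n - 1) n (face_map i)"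
  by (rule inj_mono_imp_mono_map[OF inj_mono_face_map])

lemma inj_mono_edge: "i < j \<Longrightarrow> j \<le> n \<Longrightarrow> inj_mono 1 n (edge i j)"
  by (auto simp: inj_mono_def edge_def)

lemma inj_mono_vtx: "i \<le> n \<Longrightarrow> inj_mono 0 n (vtx i)"
  by (auto simp: inj_mono_def vtx_def)

section \<open>Simplicial sets\<close>

lemma sset_act_closed:
  "is_sset A \<Longrightarrow> mono_map m n \<alpha> \<Longrightarrow> a \<in> sset_carrier A n \<Longrightarrow> sset_act A n m \<alpha> a \<in> sset_carrier A m"
  unfolding is_sset_def by blast

lemma sset_act_comp:
  "is_sset A \<Longrightarrow> mono_map m n \<alpha> \<Longrightarrow> mono_map p m \<beta> \<Longrightarrow> a \<in> sset_carrier A n \<Longrightarrow>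
   sset_act A m p \<beta> (sset_act A n m \<alpha> a) = sset_act A n p (\<alpha> \<circ> \<beta>) a"
  unfolding is_sset_def by blast

lemma sset_act_cong:
  "is_sset A \<Longrightarrow> (\<And>i. i \<le> m \<Longrightarrow> \<alpha> i = \<alpha>' i) \<Longrightarrow> a \<in> sset_carrier A n \<Longrightarrow>
   sset_act A n m \<alpha> a = sset_act A n m \<alpha>' a"
  unfolding is_sset_def by blast

lemma sset_act_vertex_id: "is_sset A \<Longrightarrow> a \<in> sset_carrier A 0 \<Longrightarrow> sset_act A 0 0 (\<lambda>_. 0) a = a"
  unfolding is_sset_def by (metis le_zero_eq)

lemma sset_act_face_map_vertex:
  "is_sset A \<Longrightarrow> a \<in> sset_carrier A 1 \<Longrightarrow> i \<le> 1 \<Longrightarrow>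
   sset_act A 1 0 (face_map i) a = sset_act A 1 0 (\<lambda>_. 1 - i) a"
  by (rule sset_act_cong) (auto simp: face_map_def)

lemma sset_act_vertex_face_map:
  "is_sset A \<Longrightarrow> a \<in> sset_carrier A 2 \<Longrightarrow> i \<le> 2 \<Longrightarrow> v \<le> 1 \<Longrightarrow>
   sset_act A 1 0 (\<lambda>_. v) (sset_act A 2 1 (face_map i) a) = sset_act A 2 0 (\<lambda>_. face_map i v) a"
  using sset_act_comp[of A 1 2 "face_map i" 0 "\<lambda>_. v" a] mono_map_face_map[of 2 i] mono_map_const[of v 1 0]
  by (simp add: o_def)

lemma sset_act_vertex_degenerate:
  "is_sset A \<Longrightarrow> a \<in> sset_carrier A 0 \<Longrightarrow> v \<le> 1 \<Longrightarrow>
   sset_act A 1 0 (\<lambda>_. v) (sset_act A 0 1 (\<lambda>_. 0) a) = a"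
  using sset_act_comp[of A 1 0 "\<lambda>_. 0" 0 "\<lambda>_. v" a] mono_map_const[of 0 0 1] mono_map_const[of v 1 0]
  by (simp add: o_def sset_act_vertex_id)

lemma sub_sset_is_sset:
  assumes "is_sset A"
    and "\<And>n m \<alpha> a. mono_map m n \<alpha> \<Longrightarrow> a \<in> sset_carrier A n \<Longrightarrow> P n a \<Longrightarrow> P m (sset_act A n m \<alpha> a)"
  shows "is_sset (sub_sset A P)"
  using assms unfolding is_sset_def sub_sset_def by auto

definition sset_edge :: "'a sset \<Rightarrow> 'a \<Rightarrow> 'a \<Rightarrow> bool" where
  "sset_edge A u v \<longleftrightarrow>
     (\<exists>e\<in>sset_carrier A 1. sset_act A 1 0 (\<lambda>_. 0) e = u \<and> sset_act A 1 0 (\<lambda>_. 1) e = v)"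

lemma sset_edge_refl:
  assumes "is_sset A" and "u \<in> sset_carrier A 0"
  shows "sset_edge A u u"
proof -
  have "sset_act A 0 1 (\<lambda>_. 0) u \<in> sset_carrier A 1"
    using sset_act_closed[OF assms(1) mono_map_const assms(2)] by simp
  then show ?thesis
    unfolding sset_edge_def
    using sset_act_vertex_degenerate[OF assms, of 0] sset_act_vertex_degenerate[OF assms, of 1] by auto
qed

lemma simplicial_map_sset_edge:
  assumes F: "simplicial_map A B F" and "sset_edge A u v"
  shows "sset_edge B (F u) (F v)"
proof -
  obtain e where e: "e \<in> sset_carrier A 1" "sset_act A 1 0 (\<lambda>_. 0) e = u" "sset_act A 1 0 (\<lambda>_. 1) e = v"
    using assms(2) unfolding sset_edge_def by blast
  have "F (sset_act A 1 0 (\<lambda>_. w) e) = sset_act B 1 0 (\<lambda>_. w) (F e)" if "w \<le> 1" for w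
    using F e(1) mono_map_const[OF that, of 0] unfolding simplicial_map_def by blast
  moreover have "F e \<in> sset_carrier B 1" using F e(1) unfolding simplicial_map_def by blast
  ultimately show ?thesis unfolding sset_edge_def using e(2,3) by (metis le_refl zero_le)
qed

text \<open>Restricting a homotopy to the cylinder on a degenerate edge gives an edge.\<close>

lemma homotopic_sset_edge:
  assumes "homotopic A B F G" and A: "is_sset A" and a: "a \<in> sset_carrier A 0"
  shows "sset_edge B (F a) (G a)"
proof -
  obtain h where h: "simplicial_map (prod_sset A delta1) B h"
    and hFG: "\<And>n a. a \<in> sset_carrier A n \<Longrightarrow> h (a, const_simplex n 0) = F a \<and> h (a, const_simplex n 1) = G a"
    using assms(1) unfolding homotopic_def by blast
  define s where "s = sset_act A 0 1 (\<lambda>_. 0) a"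
  define \<iota> where "\<iota> = (\<lambda>j::nat. if j \<le> 1 then j else 0)"
  have "s \<in> sset_carrier A 1" unfolding s_def by (rule sset_act_closed[OF A mono_map_const a]) simp
  moreover have "\<iota> \<in> sset_carrier delta1 1" unfolding delta1_def \<iota>_def by (auto simp: mono_map_def)
  ultimately have cyl: "(s, \<iota>) \<in> sset_carrier (prod_sset A delta1) 1" by (simp add: prod_sset_def)
  have vertex: "sset_act B 1 0 (\<lambda>_. v) (h (s, \<iota>)) = h (a, const_simplex 0 v)" if "v \<le> 1" for v
  proof -
    have "sset_act B 1 0 (\<lambda>_. v) (h (s, \<iota>)) = h (sset_act (prod_sset A delta1) 1 0 (\<lambda>_. v) (s, \<iota>))"
      using h cyl mono_map_const[OF that, of 0] unfolding simplicial_map_def by (simp del: One_nat_def)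
    also have "sset_act (prod_sset A delta1) 1 0 (\<lambda>_. v) (s, \<iota>)
        = (sset_act A 1 0 (\<lambda>_. v) s, sset_act delta1 1 0 (\<lambda>_. v) \<iota>)"
      by (simp add: prod_sset_def)
    also have "\<dots> = (a, const_simplex 0 v)"
      using sset_act_vertex_degenerate[OF A a that] that
      by (auto simp: s_def \<iota>_def delta1_def const_simplex_def)
    finally show ?thesis .
  qed
  have "h (s, \<iota>) \<in> sset_carrier B 1" using h cyl unfolding simplicial_map_def by blast
  moreover have "sset_act B 1 0 (\<lambda>_. 0) (h (s, \<iota>)) = F a" using vertex[of 0] hFG[OF a] by simp
  moreover have "sset_act B 1 0 (\<lambda>_. 1) (h (s, \<iota>)) = G a" using vertex[of 1] hFG[OF a] by simp
  ultimately show ?thesis unfolding sset_edge_def by blast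
qed

lemma kan_complex_horn_filler:
  assumes "kan_complex A" and "1 \<le> n" and "k \<le> n"
    and "\<forall>i\<le>n. i \<noteq> k \<longrightarrow> y i \<in> sset_carrier A (n - 1)"
    and "\<forall>i j. i < j \<and> j \<le> n \<and> i \<noteq> k \<and> j \<noteq> k \<longrightarrow>
           sset_act A (n - 1) (n - 2) (face_map i) (y j) = sset_act A (n - 1) (n - 2) (face_map (j - 1)) (y i)"
  shows "\<exists>\<sigma>\<in>sset_carrier A n. \<forall>i\<le>n. i \<noteq> k \<longrightarrow> sset_act A n (n - 1) (face_map i) \<sigma> = y i"
  using assms unfolding kan_complex_def kan_fibration_def point_sset_def by auto

lemma kan_complex_inner_horn2_filler:
  assumes K: "kan_complex A" and "a0 \<in> sset_carrier A 1" "a2 \<in> sset_carrier A 1"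
    and "sset_act A 1 0 (face_map 0) a2 = sset_act A 1 0 (face_map 1) a0"
  shows "\<exists>\<sigma>\<in>sset_carrier A 2. sset_act A 2 1 (face_map 0) \<sigma> = a0 \<and> sset_act A 2 1 (face_map 2) \<sigma> = a2"
proof -
  define y where "y = (\<lambda>i::nat. if i = 0 then a0 else a2)"
  have "\<forall>i j. i < j \<and> j \<le> 2 \<and> i \<noteq> 1 \<and> j \<noteq> 1 \<longrightarrow>
      sset_act A 1 0 (face_map i) (y j) = sset_act A 1 0 (face_map (j - 1)) (y i)"
  proof (intro allI impI)
    fix i j :: nat assume "i < j \<and> j \<le> 2 \<and> i \<noteq> 1 \<and> j \<noteq> 1"
    then have "i = 0" "j = 2" by auto
    then show "sset_act A 1 0 (face_map i) (y j) = sset_act A 1 0 (face_map (j - 1)) (y i)"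
      using assms(4) by (simp add: y_def)
  qed
  moreover have "\<forall>i\<le>2. i \<noteq> 1 \<longrightarrow> y i \<in> sset_carrier A 1" using assms(2,3) by (simp add: y_def)
  ultimately obtain \<sigma> where "\<sigma> \<in> sset_carrier A 2"
    and faces: "\<forall>i\<le>2. i \<noteq> 1 \<longrightarrow> sset_act A 2 1 (face_map i) \<sigma> = y i"
    using kan_complex_horn_filler[OF K, of 2 1 y] by auto
  moreover have "sset_act A 2 1 (face_map 0) \<sigma> = a0" using faces[rule_format, of 0] by (simp add: y_def)
  moreover have "sset_act A 2 1 (face_map 2) \<sigma> = a2" using faces[rule_format, of 2] by (simp add: y_def)
  ultimately show ?thesis by blast
qed

lemma kan_complex_outer_horn2_filler:
  assumes K: "kan_complex A" and "a1 \<in> sset_carrier A 1" "a2 \<in> sset_carrier A 1"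
    and "sset_act A 1 0 (face_map 1) a2 = sset_act A 1 0 (face_map 1) a1"
  shows "\<exists>\<sigma>\<in>sset_carrier A 2. sset_act A 2 1 (face_map 1) \<sigma> = a1 \<and> sset_act A 2 1 (face_map 2) \<sigma> = a2"
proof -
  define y where "y = (\<lambda>i::nat. if i = 1 then a1 else a2)"
  have "\<forall>i j. i < j \<and> j \<le> 2 \<and> i \<noteq> 0 \<and> j \<noteq> 0 \<longrightarrow>
      sset_act A 1 0 (face_map i) (y j) = sset_act A 1 0 (face_map (j - 1)) (y i)"
  proof (intro allI impI)
    fix i j :: nat assume "i < j \<and> j \<le> 2 \<and> i \<noteq> 0 \<and> j \<noteq> 0"
    then have "i = 1" "j = 2" by auto
    then show "sset_act A 1 0 (face_map i) (y j) = sset_act A 1 0 (face_map (j - 1)) (y i)"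
      using assms(4) by (simp add: y_def)
  qed
  moreover have "\<forall>i\<le>2. i \<noteq> 0 \<longrightarrow> y i \<in> sset_carrier A 1" using assms(2,3) by (simp add: y_def)
  ultimately obtain \<sigma> where "\<sigma> \<in> sset_carrier A 2"
    and faces: "\<forall>i\<le>2. i \<noteq> 0 \<longrightarrow> sset_act A 2 1 (face_map i) \<sigma> = y i"
    using kan_complex_horn_filler[OF K, of 2 0 y] by auto
  moreover have "sset_act A 2 1 (face_map 1) \<sigma> = a1" using faces[rule_format, of 1] by (simp add: y_def)
  moreover have "sset_act A 2 1 (face_map 2) \<sigma> = a2" using faces[rule_format, of 2] by (simp add: y_def)
  ultimately show ?thesis by blast
qed

lemma kan_complex_sset_edge_trans:
  assumes K: "kan_complex A" and A: "is_sset A"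
    and "sset_edge A u v" and "sset_edge A v w"
  shows "sset_edge A u w"
proof -
  obtain e1 where e1: "e1 \<in> sset_carrier A 1" "sset_act A 1 0 (\<lambda>_. 0) e1 = u" "sset_act A 1 0 (\<lambda>_. 1) e1 = v"
    using assms(3) unfolding sset_edge_def by blast
  obtain e2 where e2: "e2 \<in> sset_carrier A 1" "sset_act A 1 0 (\<lambda>_. 0) e2 = v" "sset_act A 1 0 (\<lambda>_. 1) e2 = w"
    using assms(4) unfolding sset_edge_def by blast
  have "sset_act A 1 0 (face_map 0) e1 = sset_act A 1 0 (face_map 1) e2"
    using sset_act_face_map_vertex[OF A e1(1), of 0] sset_act_face_map_vertex[OF A e2(1), of 1] e1 e2
    by simp
  then obtain \<sigma> where \<sigma>: "\<sigma> \<in> sset_carrier A 2"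
    and faces: "sset_act A 2 1 (face_map 0) \<sigma> = e2" "sset_act A 2 1 (face_map 2) \<sigma> = e1"
    using kan_complex_inner_horn2_filler[OF K e2(1) e1(1)] by blast
  note vertices = sset_act_vertex_face_map[OF A \<sigma>]
  show ?thesis
    unfolding sset_edge_def
  proof (intro bexI conjI)
    show "sset_act A 2 1 (face_map 1) \<sigma> \<in> sset_carrier A 1"
      using sset_act_closed[OF A mono_map_face_map[of 2 1] \<sigma>] by simp
    show "sset_act A 1 0 (\<lambda>_. 0) (sset_act A 2 1 (face_map 1) \<sigma>) = u"
      using vertices[of 1 0] vertices[of 2 0] faces e1 by (simp add: face_map_def)
    show "sset_act A 1 0 (\<lambda>_. 1) (sset_act A 2 1 (face_map 1) \<sigma>) = w"
      using vertices[of 1 1] vertices[of 0 1] faces e2 by (simp add: face_map_def)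
  qed
qed

lemma kan_complex_sset_edge_sym:
  assumes K: "kan_complex A" and A: "is_sset A" and "sset_edge A u v"
  shows "sset_edge A v u"
proof -
  obtain e where e: "e \<in> sset_carrier A 1" "sset_act A 1 0 (\<lambda>_. 0) e = u" "sset_act A 1 0 (\<lambda>_. 1) e = v"
    using assms(3) unfolding sset_edge_def by blast
  have u: "u \<in> sset_carrier A 0"
    using sset_act_closed[OF A mono_map_const e(1), of 0 0] e(2) by simp
  obtain d where d: "d \<in> sset_carrier A 1" "sset_act A 1 0 (\<lambda>_. 0) d = u" "sset_act A 1 0 (\<lambda>_. 1) d = u"
    using sset_edge_refl[OF A u] unfolding sset_edge_def by blast
  have "sset_act A 1 0 (face_map 1) e = sset_act A 1 0 (face_map 1) d"
    using sset_act_face_map_vertex[OF A e(1), of 1] sset_act_face_map_vertex[OF A d(1), of 1] e d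
    by simp
  then obtain \<sigma> where \<sigma>: "\<sigma> \<in> sset_carrier A 2"
    and faces: "sset_act A 2 1 (face_map 1) \<sigma> = d" "sset_act A 2 1 (face_map 2) \<sigma> = e"
    using kan_complex_outer_horn2_filler[OF K d(1) e(1)] by blast
  note vertices = sset_act_vertex_face_map[OF A \<sigma>]
  show ?thesis
    unfolding sset_edge_def
  proof (intro bexI conjI)
    show "sset_act A 2 1 (face_map 0) \<sigma> \<in> sset_carrier A 1"
      using sset_act_closed[OF A mono_map_face_map[of 2 0] \<sigma>] by simp
    show "sset_act A 1 0 (\<lambda>_. 0) (sset_act A 2 1 (face_map 0) \<sigma>) = v"
      using vertices[of 0 0] vertices[of 2 1] faces e by (simp add: face_map_def)
    show "sset_act A 1 0 (\<lambda>_. 1) (sset_act A 2 1 (face_map 0) \<sigma>) = u"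
      using vertices[of 0 1] vertices[of 1 1] faces d by (simp add: face_map_def)
  qed
qed

text \<open>If \<open>[\<psi>] \<circ> [\<phi>]\<inverse> = id\<close> with homotopy inverse \<open>G\<close> of \<open>\<phi>\<close>, then
  \<open>\<psi> a \<leftarrow> \<psi> (G (\<phi> a)) \<rightarrow> \<phi> a\<close>; in a Kan complex this zigzag can be straightened.\<close>

lemma ho_comp_inv_is_id_sset_edge:
  assumes "ho_comp_inv_is_id A B \<phi> \<psi>" and A: "is_sset A" and B: "is_sset B" "kan_complex B"
    and a: "a \<in> sset_carrier A 0"
  shows "sset_edge B (\<phi> a) (\<psi> a)"
proof -
  obtain G where \<psi>: "simplicial_map A B \<psi>" and \<phi>: "simplicial_map A B \<phi>"
    and GA: "homotopic A A (G \<circ> \<phi>) (\<lambda>a. a)" and GB: "homotopic B B (\<psi> \<circ> G) (\<lambda>b. b)"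
    using assms(1) unfolding ho_comp_inv_is_id_def homotopy_inverse_def by blast
  have "\<phi> a \<in> sset_carrier B 0" using \<phi> a unfolding simplicial_map_def by blast
  then have "sset_edge B (\<psi> (G (\<phi> a))) (\<phi> a)" using homotopic_sset_edge[OF GB B(1)] by simp
  moreover have "sset_edge B (\<psi> (G (\<phi> a))) (\<psi> a)"
    using simplicial_map_sset_edge[OF \<psi> homotopic_sset_edge[OF GA A a]] by simp
  ultimately show ?thesis using kan_complex_sset_edge_sym[OF B(2,1)] kan_complex_sset_edge_trans[OF B(2,1)] by blast
qed

text \<open>On a 1-simplex, \<open>face_map 1\<close> picks the source vertex and \<open>face_map 0\<close> the target.\<close>

lemma kan_fibration_vertex_lifting:
  assumes p: "kan_fibration A B p" and A: "is_sset A" and a: "a \<in> sset_carrier A 0"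
    and b: "b \<in> sset_carrier B 1" and "sset_act B 1 0 (face_map 1) b = p a"
  shows "\<exists>a'\<in>sset_carrier A 0. p a' = sset_act B 1 0 (face_map 0) b"
proof -
  have "\<exists>\<sigma>\<in>sset_carrier A 1. p \<sigma> = b \<and>
      (\<forall>i\<le>1. i \<noteq> 0 \<longrightarrow> sset_act A 1 (1 - 1) (face_map i) \<sigma> = (\<lambda>_. a) i)"
    by (rule p[unfolded kan_fibration_def, THEN conjunct2, rule_format, of 1 0 "\<lambda>_. a" b])
      (use a b assms(5) in \<open>auto simp: le_Suc_eq\<close>)
  then obtain \<sigma> where \<sigma>: "\<sigma> \<in> sset_carrier A 1" and "p \<sigma> = b" by blast
  moreover have "p (sset_act A 1 0 (face_map 0) \<sigma>) = sset_act B 1 0 (face_map 0) (p \<sigma>)"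
    using p \<sigma> mono_map_face_map[of 1 0] unfolding kan_fibration_def simplicial_map_def by simp
  moreover have "sset_act A 1 0 (face_map 0) \<sigma> \<in> sset_carrier A 0"
    using sset_act_closed[OF A mono_map_face_map[of 1 0] \<sigma>] by simp
  ultimately show ?thesis by blast
qed

section \<open>Semi-simplicial spaces\<close>

lemma mapsp_act: "sset_act (mapsp X x y) = sset_act (ss_lev X 1)"
  by (simp add: mapsp_def sub_sset_def)

lemma mapsp_carrier:
  "e \<in> sset_carrier (mapsp X x y) k \<longleftrightarrow> e \<in> sset_carrier (ss_lev X 1) k \<and>
     ss_res X 1 0 (vtx 0) e = degen X 0 k x \<and> ss_res X 1 0 (vtx 1) e = degen X 0 k y"
  by (simp add: mapsp_def sub_sset_def)

lemma CR_carrier: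
  "\<sigma> \<in> sset_carrier (CR X f z) k \<longleftrightarrow> \<sigma> \<in> sset_carrier (ss_lev X 2) k \<and>
     ss_res X 2 1 (edge 1 2) \<sigma> = degen X 1 k f \<and> ss_res X 2 0 (vtx 0) \<sigma> = degen X 0 k z"
  by (simp add: CR_def sub_sset_def)

lemma CL_carrier:
  "\<sigma> \<in> sset_carrier (CL X f z) k \<longleftrightarrow> \<sigma> \<in> sset_carrier (ss_lev X 2) k \<and>
     ss_res X 2 1 (edge 0 1) \<sigma> = degen X 1 k f \<and> ss_res X 2 0 (vtx 2) \<sigma> = degen X 0 k z"
  by (simp add: CL_def sub_sset_def)

definition triangle_boundary :: "'a \<Rightarrow> 'a \<Rightarrow> 'a \<Rightarrow> nat \<Rightarrow> 'a" where
  "triangle_boundary a0 a1 a2 =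
     (\<lambda>i. if i = 0 then a0 else if i = 1 then a1 else if i = 2 then a2 else undefined)"

lemma triangle_boundary_eq_iff:
  "triangle_boundary a0 a1 a2 = triangle_boundary b0 b1 b2 \<longleftrightarrow> a0 = b0 \<and> a1 = b1 \<and> a2 = b2"
proof
  assume eq: "triangle_boundary a0 a1 a2 = triangle_boundary b0 b1 b2"
  show "a0 = b0 \<and> a1 = b1 \<and> a2 = b2"
    using fun_cong[OF eq, of 0] fun_cong[OF eq, of 1] fun_cong[OF eq, of 2] by (simp add: triangle_boundary_def)
qed simp

lemma sset_act_matching_triangle_boundary:
  "sset_act (matching X 2) k k' \<alpha> (triangle_boundary a0 a1 a2) =
   triangle_boundary (sset_act (ss_lev X 1) k k' \<alpha> a0) (sset_act (ss_lev X 1) k k' \<alpha> a1)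
     (sset_act (ss_lev X 1) k k' \<alpha> a2)"
  by (rule ext) (simp add: matching_def triangle_boundary_def bidx_def)

context
  fixes X :: "'a ssspace"
  assumes sss: "semi_simplicial_space X"
begin

lemma is_sset_level: "is_sset (ss_lev X n)"
  using sss unfolding semi_simplicial_space_def by blast

lemma simplicial_map_res: "inj_mono m n \<delta> \<Longrightarrow> simplicial_map (ss_lev X n) (ss_lev X m) (ss_res X n m \<delta>)"
  using sss unfolding semi_simplicial_space_def by blast

lemma res_closed:
  "inj_mono m n \<delta> \<Longrightarrow> a \<in> sset_carrier (ss_lev X n) k \<Longrightarrow> ss_res X n m \<delta> a \<in> sset_carrier (ss_lev X m) k"
  using simplicial_map_res unfolding simplicial_map_def by blast

lemma res_sset_act:
  "inj_mono m n \<delta> \<Longrightarrow> mono_map k' k \<alpha> \<Longrightarrow> a \<in> sset_carrier (ss_lev X n) k \<Longrightarrow>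
   ss_res X n m \<delta> (sset_act (ss_lev X n) k k' \<alpha> a) = sset_act (ss_lev X m) k k' \<alpha> (ss_res X n m \<delta> a)"
  using simplicial_map_res unfolding simplicial_map_def by blast

lemma res_res:
  "inj_mono m n \<delta> \<Longrightarrow> inj_mono p m \<epsilon> \<Longrightarrow> a \<in> sset_carrier (ss_lev X n) k \<Longrightarrow>
   ss_res X m p \<epsilon> (ss_res X n m \<delta> a) = ss_res X n p (\<delta> \<circ> \<epsilon>) a"
  using sss unfolding semi_simplicial_space_def by blast

lemma res_cong:
  "(\<And>i. i \<le> m \<Longrightarrow> \<delta> i = \<delta>' i) \<Longrightarrow> a \<in> sset_carrier (ss_lev X n) k \<Longrightarrow>
   ss_res X n m \<delta> a = ss_res X n m \<delta>' a"
  using sss unfolding semi_simplicial_space_def by blast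

lemma degen_0: "p \<in> sset_carrier (ss_lev X m) 0 \<Longrightarrow> degen X m 0 p = p"
  unfolding degen_def by (rule sset_act_vertex_id[OF is_sset_level])

lemma degen_closed: "p \<in> sset_carrier (ss_lev X m) 0 \<Longrightarrow> degen X m k p \<in> sset_carrier (ss_lev X m) k"
  unfolding degen_def by (rule sset_act_closed[OF is_sset_level]) (auto simp: mono_map_const)

lemma sset_act_degen:
  "p \<in> sset_carrier (ss_lev X m) 0 \<Longrightarrow> mono_map k' k \<alpha> \<Longrightarrow>
   sset_act (ss_lev X m) k k' \<alpha> (degen X m k p) = degen X m k' p"
  unfolding degen_def by (subst sset_act_comp[OF is_sset_level]) (auto simp: mono_map_const o_def)

lemma is_sset_fibre:
  assumes "inj_mono m n \<delta>" "p \<in> sset_carrier (ss_lev X m) 0"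
    and "inj_mono m' n \<delta>'" "p' \<in> sset_carrier (ss_lev X m') 0"
  shows "is_sset (sub_sset (ss_lev X n)
           (\<lambda>k a. ss_res X n m \<delta> a = degen X m k p \<and> ss_res X n m' \<delta>' a = degen X m' k p'))"
  by (rule sub_sset_is_sset[OF is_sset_level]) (use assms in \<open>simp add: res_sset_act sset_act_degen\<close>)

lemma is_sset_mapsp:
  "x \<in> sset_carrier (ss_lev X 0) 0 \<Longrightarrow> y \<in> sset_carrier (ss_lev X 0) 0 \<Longrightarrow> is_sset (mapsp X x y)"
  unfolding mapsp_def by (rule is_sset_fibre) (auto simp: inj_mono_vtx)

lemma is_sset_CR:
  "f \<in> sset_carrier (ss_lev X 1) 0 \<Longrightarrow> z \<in> sset_carrier (ss_lev X 0) 0 \<Longrightarrow> is_sset (CR X f z)"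
  unfolding CR_def by (rule is_sset_fibre) (auto simp: inj_mono_def vtx_def edge_def)

lemma is_sset_CL:
  "f \<in> sset_carrier (ss_lev X 1) 0 \<Longrightarrow> z \<in> sset_carrier (ss_lev X 0) 0 \<Longrightarrow> is_sset (CL X f z)"
  unfolding CL_def by (rule is_sset_fibre) (auto simp: inj_mono_def vtx_def edge_def)

lemma res_face_map_vertex:
  "e \<in> sset_carrier (ss_lev X 1) k \<Longrightarrow> l \<le> 1 \<Longrightarrow> ss_res X 1 0 (face_map l) e = ss_res X 1 0 (vtx (1 - l)) e"
  by (rule res_cong) (auto simp: face_map_def vtx_def)

lemma mapsp_res_face_map:
  "e \<in> sset_carrier (mapsp X x y) k \<Longrightarrow> l \<le> 1 \<Longrightarrow>
   ss_res X 1 0 (face_map l) e = degen X 0 k (if l = 0 then y else x)"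
  using res_face_map_vertex[of e k l] by (auto simp: mapsp_carrier)

lemma res_vtx_res_edge:
  assumes \<sigma>: "\<sigma> \<in> sset_carrier (ss_lev X 2) k" and "i < j" "j \<le> 2" "l \<le> 1"
  shows "ss_res X 1 0 (vtx l) (ss_res X 2 1 (edge i j) \<sigma>) = ss_res X 2 0 (vtx (edge i j l)) \<sigma>"
proof -
  have "ss_res X 1 0 (vtx l) (ss_res X 2 1 (edge i j) \<sigma>) = ss_res X 2 0 (edge i j \<circ> vtx l) \<sigma>"
    using assms by (intro res_res inj_mono_edge inj_mono_vtx)
  also have "\<dots> = ss_res X 2 0 (vtx (edge i j l)) \<sigma>"
    by (rule res_cong[OF _ \<sigma>]) (simp add: vtx_def)
  finally show ?thesis .
qed

lemma res_face_map_eq_res_edge: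
  assumes "\<sigma> \<in> sset_carrier (ss_lev X 2) k"
  shows "ss_res X 2 1 (face_map 0) \<sigma> = ss_res X 2 1 (edge 1 2) \<sigma>"
    and "ss_res X 2 1 (face_map 1) \<sigma> = ss_res X 2 1 (edge 0 2) \<sigma>"
    and "ss_res X 2 1 (face_map 2) \<sigma> = ss_res X 2 1 (edge 0 1) \<sigma>"
  by (rule res_cong[OF _ assms]; auto simp: face_map_def edge_def)+

lemma boundary_map_2:
  assumes "\<sigma> \<in> sset_carrier (ss_lev X 2) k"
  shows "boundary_map X 2 \<sigma> =
     triangle_boundary (ss_res X 2 1 (edge 1 2) \<sigma>) (ss_res X 2 1 (edge 0 2) \<sigma>) (ss_res X 2 1 (edge 0 1) \<sigma>)"
proof
  fix i :: nat
  consider "i = 0" | "i = 1" | "i = 2" | "2 < i" by linarith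
  then show "boundary_map X 2 \<sigma> i = triangle_boundary (ss_res X 2 1 (edge 1 2) \<sigma>)
      (ss_res X 2 1 (edge 0 2) \<sigma>) (ss_res X 2 1 (edge 0 1) \<sigma>) i"
    by cases (simp_all add: boundary_map_def triangle_boundary_def bidx_def One_nat_def
        res_face_map_eq_res_edge[OF assms, unfolded One_nat_def])
qed

lemma triangle_boundary_in_matching:
  assumes "a0 \<in> sset_carrier (mapsp X x y) k" "a1 \<in> sset_carrier (mapsp X z y) k"
    and "a2 \<in> sset_carrier (mapsp X z x) k"
  shows "triangle_boundary a0 a1 a2 \<in> sset_carrier (matching X 2) k"
proof -
  let ?\<tau> = "triangle_boundary a0 a1 a2"
  have compat: "ss_res X 1 0 (face_map i) (?\<tau> j) = ss_res X 1 0 (face_map (j - 1)) (?\<tau> i)"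
    if ij: "i < j" "j \<le> 2" for i j
  proof -
    consider "i = 0" "j = 1" | "i = 0" "j = 2" | "i = 1" "j = 2" using ij by force
    then show ?thesis
      by cases (simp_all add: triangle_boundary_def One_nat_def
          mapsp_res_face_map[OF assms(1), unfolded One_nat_def]
          mapsp_res_face_map[OF assms(2), unfolded One_nat_def]
          mapsp_res_face_map[OF assms(3), unfolded One_nat_def])
  qed
  have "?\<tau> i \<in> sset_carrier (ss_lev X 1) k" if "i \<le> 2" for i
    using assms that by (auto simp: triangle_boundary_def mapsp_carrier le_Suc_eq numeral_2_eq_2)
  then show ?thesis
    using compat by (simp add: matching_def bidx_def triangle_boundary_def)
qed

lemma res_degen:
  "inj_mono m n \<delta> \<Longrightarrow> p \<in> sset_carrier (ss_lev X n) 0 \<Longrightarrow>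
   ss_res X n m \<delta> (degen X n k p) = degen X m k (ss_res X n m \<delta> p)"
  unfolding degen_def by (rule res_sset_act) (auto simp: mono_map_const)

lemma CR_res_vtx_2:
  assumes \<sigma>: "\<sigma> \<in> sset_carrier (CR X f z) k" and f: "f \<in> sset_carrier (mapsp X x y) 0"
    and y: "y \<in> sset_carrier (ss_lev X 0) 0"
  shows "ss_res X 2 0 (vtx 2) \<sigma> = degen X 0 k y"
proof -
  have \<sigma>2: "\<sigma> \<in> sset_carrier (ss_lev X 2) k" and f1: "f \<in> sset_carrier (ss_lev X 1) 0"
    using \<sigma> f by (simp_all add: CR_carrier mapsp_carrier)
  have "ss_res X 2 0 (vtx 2) \<sigma> = ss_res X 1 0 (vtx 1) (ss_res X 2 1 (edge 1 2) \<sigma>)"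
    using res_vtx_res_edge[OF \<sigma>2, of 1 2 1] by (simp add: edge_def)
  also have "\<dots> = ss_res X 1 0 (vtx 1) (degen X 1 k f)" using \<sigma> by (simp add: CR_carrier)
  also have "\<dots> = degen X 0 k (ss_res X 1 0 (vtx 1) f)" by (rule res_degen[OF inj_mono_vtx f1]) simp
  also have "\<dots> = degen X 0 k y" using f degen_0[OF y] by (simp add: mapsp_carrier)
  finally show ?thesis .
qed

lemma CR_res_edge_0_2:
  assumes \<sigma>: "\<sigma> \<in> sset_carrier (CR X f z) k" and f: "f \<in> sset_carrier (mapsp X x y) 0"
    and y: "y \<in> sset_carrier (ss_lev X 0) 0"
  shows "ss_res X 2 1 (edge 0 2) \<sigma> \<in> sset_carrier (mapsp X z y) k"
proof -
  have \<sigma>2: "\<sigma> \<in> sset_carrier (ss_lev X 2) k" using \<sigma> by (simp add: CR_carrier)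
  have "ss_res X 1 0 (vtx 0) (ss_res X 2 1 (edge 0 2) \<sigma>) = ss_res X 2 0 (vtx 0) \<sigma>"
    using res_vtx_res_edge[OF \<sigma>2, of 0 2 0] by (simp add: edge_def)
  moreover have "ss_res X 1 0 (vtx 1) (ss_res X 2 1 (edge 0 2) \<sigma>) = ss_res X 2 0 (vtx 2) \<sigma>"
    using res_vtx_res_edge[OF \<sigma>2, of 0 2 1] by (simp add: edge_def)
  ultimately show ?thesis
    using \<sigma> res_closed[OF inj_mono_edge \<sigma>2, of 0 2] CR_res_vtx_2[OF \<sigma> f y]
    by (simp add: mapsp_carrier CR_carrier)
qed

end

section \<open>Consequences of Reedy fibrancy\<close>

context
  fixes X :: "'a ssspace"
  assumes sss: "semi_simplicial_space X" and rf: "reedy_fibrant X"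
begin

text \<open>A horn in \<open>Map\<^sub>X(x, y)\<close> is a horn in \<open>X\<^sub>1\<close> lying over the degenerate simplex on
  \<open>(x, y)\<close> of the matching object \<open>X\<^sub>0 \<times> X\<^sub>0\<close>, so Reedy fibrancy at level 1 fills it.\<close>

lemma mapsp_horn_filler:
  assumes x: "x \<in> sset_carrier (ss_lev X 0) 0" and y: "y \<in> sset_carrier (ss_lev X 0) 0"
    and n: "1 \<le> n" and k: "k \<le> n"
    and h: "\<forall>i\<le>n. i \<noteq> k \<longrightarrow> h i \<in> sset_carrier (mapsp X x y) (n - 1)"
    and compat: "\<forall>i j. i < j \<and> j \<le> n \<and> i \<noteq> k \<and> j \<noteq> k \<longrightarrow>
      sset_act (ss_lev X 1) (n - 1) (n - 2) (face_map i) (h j) =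
      sset_act (ss_lev X 1) (n - 1) (n - 2) (face_map (j - 1)) (h i)"
  shows "\<exists>\<sigma>\<in>sset_carrier (mapsp X x y) n.
           \<forall>i\<le>n. i \<noteq> k \<longrightarrow> sset_act (ss_lev X 1) n (n - 1) (face_map i) \<sigma> = h i"
proof -
  define ends where "ends = (\<lambda>l::nat. if l = 0 then y else x)"
  define \<tau> where "\<tau> = (\<lambda>l. if l \<in> bidx 1 then degen X 0 n (ends l) else undefined)"
  have ends: "ends l \<in> sset_carrier (ss_lev X 0) 0" for l using x y by (simp add: ends_def)
  have \<tau>: "\<tau> \<in> sset_carrier (matching X 1) n"
    using degen_closed[OF sss ends] by (simp add: matching_def \<tau>_def)
  have boundary: "sset_act (matching X 1) n (n - 1) (face_map i) \<tau> = boundary_map X 1 (h i)"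
    if "i \<le> n" "i \<noteq> k" for i
  proof
    fix l
    have "sset_act (ss_lev X 0) n (n - 1) (face_map i) (degen X 0 n (ends l)) = degen X 0 (n - 1) (ends l)"
      using sset_act_degen[OF sss ends mono_map_face_map] n that(1) by simp
    moreover have "h i \<in> sset_carrier (mapsp X x y) (n - 1)" using h that by blast
    ultimately show "sset_act (matching X 1) n (n - 1) (face_map i) \<tau> l = boundary_map X 1 (h i) l"
      using mapsp_res_face_map[OF sss, of "h i" x y "n - 1" l]
      by (auto simp: matching_def \<tau>_def boundary_map_def bidx_def ends_def)
  qed
  have "kan_fibration (ss_lev X 1) (matching X 1) (boundary_map X 1)"
    using rf unfolding reedy_fibrant_def by blast
  then obtain \<sigma> where \<sigma>: "\<sigma> \<in> sset_carrier (ss_lev X 1) n" and b\<sigma>: "boundary_map X 1 \<sigma> = \<tau>"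
    and faces: "\<forall>i\<le>n. i \<noteq> k \<longrightarrow> sset_act (ss_lev X 1) n (n - 1) (face_map i) \<sigma> = h i"
    unfolding kan_fibration_def using n k h compat \<tau> boundary by (simp add: mapsp_carrier) blast
  have vertices: "ss_res X 1 0 (vtx (1 - l)) \<sigma> = degen X 0 n (ends l)" if "l \<le> 1" for l
    using fun_cong[OF b\<sigma>, of l] res_face_map_vertex[OF sss \<sigma> that] that
    by (simp add: boundary_map_def \<tau>_def bidx_def)
  have "\<sigma> \<in> sset_carrier (mapsp X x y) n"
    using \<sigma> vertices[of 0] vertices[of 1] by (simp add: mapsp_carrier ends_def)
  then show ?thesis using faces by blast
qed

lemma kan_complex_mapsp:
  assumes "x \<in> sset_carrier (ss_lev X 0) 0" and "y \<in> sset_carrier (ss_lev X 0) 0"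
  shows "kan_complex (mapsp X x y)"
  unfolding kan_complex_def kan_fibration_def
  using mapsp_horn_filler[OF assms] by (auto simp: simplicial_map_def point_sset_def mapsp_act)

lemma triangle_lifting:
  assumes \<sigma>0: "\<sigma>0 \<in> sset_carrier (ss_lev X 2) 0"
    and a0: "a0 \<in> sset_carrier (mapsp X x y) 1" and a1: "a1 \<in> sset_carrier (mapsp X z y) 1"
    and a2: "a2 \<in> sset_carrier (mapsp X z x) 1"
    and start: "sset_act (ss_lev X 1) 1 0 (\<lambda>_. 0) a0 = ss_res X 2 1 (edge 1 2) \<sigma>0"
      "sset_act (ss_lev X 1) 1 0 (\<lambda>_. 0) a1 = ss_res X 2 1 (edge 0 2) \<sigma>0"
      "sset_act (ss_lev X 1) 1 0 (\<lambda>_. 0) a2 = ss_res X 2 1 (edge 0 1) \<sigma>0"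
  shows "\<exists>\<sigma>\<in>sset_carrier (ss_lev X 2) 0.
           ss_res X 2 1 (edge 1 2) \<sigma> = sset_act (ss_lev X 1) 1 0 (\<lambda>_. 1) a0 \<and>
           ss_res X 2 1 (edge 0 2) \<sigma> = sset_act (ss_lev X 1) 1 0 (\<lambda>_. 1) a1 \<and>
           ss_res X 2 1 (edge 0 1) \<sigma> = sset_act (ss_lev X 1) 1 0 (\<lambda>_. 1) a2"
proof -
  let ?b = "triangle_boundary a0 a1 a2"
  have ends: "sset_act (matching X 2) 1 0 (face_map l) ?b =
      triangle_boundary (sset_act (ss_lev X 1) 1 0 (\<lambda>_. 1 - l) a0)
        (sset_act (ss_lev X 1) 1 0 (\<lambda>_. 1 - l) a1) (sset_act (ss_lev X 1) 1 0 (\<lambda>_. 1 - l) a2)"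
    if "l \<le> 1" for l
  proof -
    have "sset_act (ss_lev X 1) 1 0 (face_map l) a = sset_act (ss_lev X 1) 1 0 (\<lambda>_. 1 - l) a"
      if "a \<in> sset_carrier (mapsp X u v) 1" for a u v
      using that \<open>l \<le> 1\<close> by (intro sset_act_face_map_vertex[OF is_sset_level[OF sss]]) (simp_all add: mapsp_carrier)
    then show ?thesis using a0 a1 a2 by (simp add: sset_act_matching_triangle_boundary)
  qed
  have kf: "kan_fibration (ss_lev X 2) (matching X 2) (boundary_map X 2)"
    using rf unfolding reedy_fibrant_def by blast
  have b: "?b \<in> sset_carrier (matching X 2) 1"
    using triangle_boundary_in_matching[OF sss a0 a1 a2] .
  have "sset_act (matching X 2) 1 0 (face_map 1) ?b = boundary_map X 2 \<sigma>0"
    using ends[of 1] start boundary_map_2[OF sss \<sigma>0] by simp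
  then obtain \<sigma> where \<sigma>: "\<sigma> \<in> sset_carrier (ss_lev X 2) 0"
    and "boundary_map X 2 \<sigma> = sset_act (matching X 2) 1 0 (face_map 0) ?b"
    using kan_fibration_vertex_lifting[OF kf is_sset_level[OF sss] \<sigma>0 b] by blast
  then have "boundary_map X 2 \<sigma> = triangle_boundary (sset_act (ss_lev X 1) 1 0 (\<lambda>_. 1) a0)
      (sset_act (ss_lev X 1) 1 0 (\<lambda>_. 1) a1) (sset_act (ss_lev X 1) 1 0 (\<lambda>_. 1) a2)"
    using ends[of 0] by simp
  then show ?thesis
    using \<sigma> unfolding boundary_map_2[OF sss \<sigma>] triangle_boundary_eq_iff by blast
qed

lemma CR_vertex_lifting:
  assumes x: "x \<in> sset_carrier (ss_lev X 0) 0" and y: "y \<in> sset_carrier (ss_lev X 0) 0"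
    and z: "z \<in> sset_carrier (ss_lev X 0) 0"
    and f: "f \<in> sset_carrier (mapsp X x y) 0" and \<sigma>0: "\<sigma>0 \<in> sset_carrier (CR X f z) 0"
    and e: "e \<in> sset_carrier (mapsp X z x) 1"
    and e0: "sset_act (ss_lev X 1) 1 0 (\<lambda>_. 0) e = ss_res X 2 1 (edge 0 1) \<sigma>0"
  shows "\<exists>\<sigma>\<in>sset_carrier (CR X f z) 0. ss_res X 2 1 (edge 0 1) \<sigma> = sset_act (ss_lev X 1) 1 0 (\<lambda>_. 1) e"
proof -
  let ?deg = "sset_act (ss_lev X 1) 0 1 (\<lambda>_. 0)"
  have deg: "?deg u \<in> sset_carrier (mapsp X a b) 1"
    if "u \<in> sset_carrier (mapsp X a b) 0" "a \<in> sset_carrier (ss_lev X 0) 0" "b \<in> sset_carrier (ss_lev X 0) 0"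
    for u a b
    using sset_act_closed[OF is_sset_mapsp[OF sss that(2,3)] mono_map_const that(1), of 0 1]
    by (simp add: mapsp_act)
  have deg_vertex: "sset_act (ss_lev X 1) 1 0 (\<lambda>_. 0) (?deg u) = u"
    if "u \<in> sset_carrier (mapsp X a b) 0" for u a b
    using that sset_act_vertex_degenerate[OF is_sset_level[OF sss], of u 1 0] by (simp add: mapsp_carrier)
  have \<sigma>0_2: "\<sigma>0 \<in> sset_carrier (ss_lev X 2) 0" using \<sigma>0 by (simp add: CR_carrier)
  have f12: "ss_res X 2 1 (edge 1 2) \<sigma>0 = f"
    using \<sigma>0 f degen_0[OF sss, of f 1] by (simp add: CR_carrier mapsp_carrier)
  have c: "ss_res X 2 1 (edge 0 2) \<sigma>0 \<in> sset_carrier (mapsp X z y) 0"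
    by (rule CR_res_edge_0_2[OF sss \<sigma>0 f y])
  obtain \<sigma> where \<sigma>: "\<sigma> \<in> sset_carrier (ss_lev X 2) 0"
    and edge12: "ss_res X 2 1 (edge 1 2) \<sigma> = f"
    and edge01: "ss_res X 2 1 (edge 0 1) \<sigma> = sset_act (ss_lev X 1) 1 0 (\<lambda>_. 1) e"
    using triangle_lifting[OF \<sigma>0_2 deg[OF f x y] deg[OF c z y] e] e0 f12
      deg_vertex[OF f] deg_vertex[OF c] sset_act_vertex_degenerate[OF is_sset_level[OF sss], of f 1 1] f
    by (auto simp: mapsp_carrier)
  have "sset_act (ss_lev X 1) 1 0 (\<lambda>_. 1) e \<in> sset_carrier (mapsp X z x) 0"
    using sset_act_closed[OF is_sset_mapsp[OF sss z x] mono_map_const e, of 1 0] by (simp add: mapsp_act)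
  moreover have "ss_res X 2 0 (vtx 0) \<sigma> = ss_res X 1 0 (vtx 0) (ss_res X 2 1 (edge 0 1) \<sigma>)"
    using res_vtx_res_edge[OF sss \<sigma>, of 0 1 0] by (simp add: edge_def)
  ultimately have "\<sigma> \<in> sset_carrier (CR X f z) 0"
    using \<sigma> edge12 edge01 f degen_0[OF sss, of f 1] degen_0[OF sss z]
    by (simp add: CR_carrier mapsp_carrier)
  then show ?thesis using edge01 by blast
qed

lemma CR_res_edge_0_1_vertex_surj:
  assumes x: "x \<in> sset_carrier (ss_lev X 0) 0" and y: "y \<in> sset_carrier (ss_lev X 0) 0"
    and z: "z \<in> sset_carrier (ss_lev X 0) 0" and f: "f \<in> sset_carrier (mapsp X x y) 0"
    and G: "homotopy_inverse (CR X f z) (mapsp X z x) (ss_res X 2 1 (edge 0 1)) G"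
    and g: "g \<in> sset_carrier (mapsp X z x) 0"
  shows "\<exists>\<sigma>\<in>sset_carrier (CR X f z) 0. ss_res X 2 1 (edge 0 1) \<sigma> = g"
proof -
  have Gg: "G g \<in> sset_carrier (CR X f z) 0"
    using G g unfolding homotopy_inverse_def simplicial_map_def by blast
  have "homotopic (mapsp X z x) (mapsp X z x) (ss_res X 2 1 (edge 0 1) \<circ> G) (\<lambda>b. b)"
    using G unfolding homotopy_inverse_def by blast
  from homotopic_sset_edge[OF this is_sset_mapsp[OF sss z x] g]
  obtain e where e: "e \<in> sset_carrier (mapsp X z x) 1"
    and e0: "sset_act (ss_lev X 1) 1 0 (\<lambda>_. 0) e = ss_res X 2 1 (edge 0 1) (G g)"
    and e1: "sset_act (ss_lev X 1) 1 0 (\<lambda>_. 1) e = g"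
    unfolding sset_edge_def mapsp_act by auto
  show ?thesis using CR_vertex_lifting[OF x y z f Gg e e0] unfolding e1 .
qed

lemma quasi_units_sset_edge:
  assumes x: "x \<in> sset_carrier (ss_lev X 0) 0" and f: "quasi_unit X x f" and g: "quasi_unit X x g"
  shows "sset_edge (mapsp X x x) f g"
proof -
  let ?M = "mapsp X x x" and ?\<psi> = "ss_res X 2 1 (edge 0 2)"
  have f0: "f \<in> sset_carrier ?M 0" and g0: "g \<in> sset_carrier ?M 0"
    using f g unfolding quasi_unit_def by auto
  have f1: "f \<in> sset_carrier (ss_lev X 1) 0" and g1: "g \<in> sset_carrier (ss_lev X 1) 0"
    using f0 g0 by (simp_all add: mapsp_carrier)
  have M: "is_sset ?M" "kan_complex ?M" using is_sset_mapsp[OF sss x x] kan_complex_mapsp[OF x x] .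
  have f_star: "ho_comp_inv_is_id (CR X f x) ?M (ss_res X 2 1 (edge 0 1)) ?\<psi>"
    and g_upper_star: "ho_comp_inv_is_id (CL X g x) ?M (ss_res X 2 1 (edge 1 2)) ?\<psi>"
    using f g x unfolding quasi_unit_def by blast+
  then obtain G where "homotopy_inverse (CR X f x) ?M (ss_res X 2 1 (edge 0 1)) G"
    unfolding ho_comp_inv_is_id_def by blast
  then obtain \<sigma> where \<sigma>R: "\<sigma> \<in> sset_carrier (CR X f x) 0" and \<sigma>g: "ss_res X 2 1 (edge 0 1) \<sigma> = g"
    using CR_res_edge_0_1_vertex_surj[OF x x x f0 _ g0] by blast
  have \<sigma>f: "ss_res X 2 1 (edge 1 2) \<sigma> = f"
    using \<sigma>R degen_0[OF sss f1] by (simp add: CR_carrier)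
  have "\<sigma> \<in> sset_carrier (CL X g x) 0"
    using \<sigma>R \<sigma>g degen_0[OF sss g1] CR_res_vtx_2[OF sss \<sigma>R f0 x] by (simp add: CR_carrier CL_carrier)
  then have "sset_edge ?M f (?\<psi> \<sigma>)"
    using ho_comp_inv_is_id_sset_edge[OF g_upper_star is_sset_CL[OF sss g1 x] M] \<sigma>f by metis
  moreover have "sset_edge ?M g (?\<psi> \<sigma>)"
    using ho_comp_inv_is_id_sset_edge[OF f_star is_sset_CR[OF sss f1 x] M \<sigma>R] unfolding \<sigma>g .
  ultimately show ?thesis
    using kan_complex_sset_edge_trans[OF M(2,1)] kan_complex_sset_edge_sym[OF M(2,1)] by blast
qed

end

section \<open>Quasi-units\<close>

lemma sset_connectedI:
  assumes "sset_carrier A 0 \<noteq> {}"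
    and "\<And>u v. u \<in> sset_carrier A 0 \<Longrightarrow> v \<in> sset_carrier A 0 \<Longrightarrow> sset_edge A u v"
  shows "sset_connected A"
  using assms unfolding sset_connected_def sset_edge_def Let_def by blast

lemma qu_sub_vertex:
  assumes "semi_simplicial_space X"
  shows "u \<in> sset_carrier (qu_sub X x) 0 \<longleftrightarrow> quasi_unit X x u"
  using sset_act_vertex_id[OF is_sset_level[OF assms, of 1], of u]
  by (auto simp: qu_sub_def sub_sset_def mapsp_act quasi_unit_def mapsp_carrier)

lemma qu_sub_edge:
  assumes "sset_edge (mapsp X x x) u v" and "quasi_unit X x u" and "quasi_unit X x v"
  shows "sset_edge (qu_sub X x) u v"
proof -
  obtain e where e: "e \<in> sset_carrier (mapsp X x x) 1"
    "sset_act (ss_lev X 1) 1 0 (\<lambda>_. 0) e = u" "sset_act (ss_lev X 1) 1 0 (\<lambda>_. 1) e = v"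
    using assms(1) unfolding sset_edge_def mapsp_act by blast
  have "quasi_unit X x (sset_act (mapsp X x x) 1 0 (\<lambda>_. w) e)" if "w \<le> 1" for w
  proof -
    have "w = 0 \<or> w = 1" using that by auto
    then show ?thesis using e assms(2,3) by (auto simp: mapsp_act)
  qed
  then have "e \<in> sset_carrier (qu_sub X x) 1" using e(1) by (simp add: qu_sub_def sub_sset_def)
  then show ?thesis using e unfolding sset_edge_def by (auto simp: qu_sub_def sub_sset_def mapsp_act)
qed

theorem mainTheorem1:
  fixes X :: "'a ssspace" and x :: 'a
  assumes "semiSegal X"
    and "x \<in> sset_carrier (ss_lev X 0) 0"
    and "sset_carrier (qu_sub X x) 0 \<noteq> {}"
  shows "sset_connected (qu_sub X x)"
proof (rule sset_connectedI[OF assms(3)])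
  fix u v
  assume "u \<in> sset_carrier (qu_sub X x) 0" "v \<in> sset_carrier (qu_sub X x) 0"
  moreover have sss: "semi_simplicial_space X" and rf: "reedy_fibrant X"
    using assms(1) unfolding semiSegal_def by auto
  ultimately have "quasi_unit X x u" "quasi_unit X x v" by (simp_all add: qu_sub_vertex)
  then show "sset_edge (qu_sub X x) u v"
    by (intro qu_sub_edge quasi_units_sset_edge[OF sss rf assms(2)])
qed

end
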